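(* Let $n\ge3$. Every optimal solution $V$ of the program $(\Gamma)$ associated to the game $CL(n)$ has rank at least $(4n-8)/3$.
   Context: Graph games: for a finite simple graph $\mathcal{G}$ with totally ordered vertex set and $e\ge1$ edges, the XOR game $A_{\mathcal{G}}$ has columns indexed by vertices and, for each edge $\{i,j\}$ with $i<j$, the two rows $(e_i-e_j)/(4e)$ and $(e_i+e_j)/(4e)$. $CL(n)$ is $A_{\mathcal{G}}$ where $\mathcal{G}$ has as vertices the nonempty subsets $S\subseteq\{1,\dots,n\}$ (in a fixed total order), with an edge between distinct $S,T$ iff $|S||T|-|S\cap T|$ is odd (equivalently $Y_SY_T=-Y_TY_S$ in the Clifford algebra generated by $Y_1,\dots,Y_n$ with $Y_i^2=1$, $Y_iY_j=-Y_jY_i$, $Y_S=Y_{i_1}\cdots Y_{i_k}$ for $S=\{i_1<\dots<i_k\}$). For a game with cost matrix $G$ with columns indexed by a set $J$, $(\Gamma)$ is the problem of maximizing $\sum_i\sqrt{\sum_{j,k}G_{ij}G_{ik}V_{jk}}$ over real positive semidefinite $J\times J$ matrices $V$ with all diagonal entries equal to $1$. *)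

theory Defs
  imports Complex_Main "Jordan_Normal_Form.DL_Rank"
begin

text \<open>Vertices of a graph with N vertices are identified with 0..<N; the total order on
  vertices is the order of the natural numbers.  E is the (symmetric, irreflexive)
  adjacency relation.\<close>

definition graph_edges :: "nat \<Rightarrow> (nat \<Rightarrow> nat \<Rightarrow> bool) \<Rightarrow> (nat \<times> nat) list" where
  "graph_edges N E = [(i, j). i \<leftarrow> [0..<N], j \<leftarrow> [0..<N], i < j \<and> E i j]"

definition graph_game :: "nat \<Rightarrow> (nat \<Rightarrow> nat \<Rightarrow> bool) \<Rightarrow> real mat" where
  "graph_game N E =
    (let es = graph_edges N E; e = real (length es) in
     mat_of_rows N (concat (map (\<lambda>(i, j).
        [vec N (\<lambda>k. ((if k = i then 1 else 0) - (if k = j then 1 else 0)) / (4 * e)),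
         vec N (\<lambda>k. ((if k = i then 1 else 0) + (if k = j then 1 else 0)) / (4 * e))]) es)))"

text \<open>CL(n): vertices are the nonempty subsets of {1..n}, listed (in the fixed total order)
  by the distinct list vs; S,T adjacent iff S ~= T and |S||T| - |S \<inter> T| is odd.\<close>
definition CL_adj :: "nat set list \<Rightarrow> nat \<Rightarrow> nat \<Rightarrow> bool" where
  "CL_adj vs i j \<longleftrightarrow> vs ! i \<noteq> vs ! j \<and>
     odd (int (card (vs ! i)) * int (card (vs ! j)) - int (card (vs ! i \<inter> vs ! j)))"

definition CL_game :: "nat set list \<Rightarrow> real mat" where
  "CL_game vs = graph_game (length vs) (CL_adj vs)"

definition psd_mat :: "real mat \<Rightarrow> bool" where
  "psd_mat V \<longleftrightarrow> V \<in> carrier_mat (dim_row V) (dim_row V) \<and> V\<^sup>T = V \<and>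
     (\<forall>x \<in> carrier_vec (dim_row V). x \<bullet> (V *\<^sub>v x) \<ge> 0)"

definition gamma_feasible :: "real mat \<Rightarrow> real mat \<Rightarrow> bool" where
  "gamma_feasible G V \<longleftrightarrow> V \<in> carrier_mat (dim_col G) (dim_col G) \<and> psd_mat V \<and>
     (\<forall>j < dim_col G. V $$ (j, j) = 1)"

definition gamma_obj :: "real mat \<Rightarrow> real mat \<Rightarrow> real" where
  "gamma_obj G V = (\<Sum>i < dim_row G. sqrt (\<Sum>j < dim_col G. \<Sum>k < dim_col G.
      G $$ (i, j) * G $$ (i, k) * V $$ (j, k)))"

definition gamma_optimal :: "real mat \<Rightarrow> real mat \<Rightarrow> bool" where
  "gamma_optimal G V \<longleftrightarrow> gamma_feasible G V \<and>
     (\<forall>W. gamma_feasible G W \<longrightarrow> gamma_obj G W \<le> gamma_obj G V)"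

definition mat_rank :: "real mat \<Rightarrow> nat" where
  "mat_rank V = vec_space.rank (dim_row V) V"

end

theory Submission
  imports Defs
begin

text \<open>
  Let V be optimal and N = 2^n - 1 the number of vertices.  Comparing V with the feasible
  identity matrix shows that V vanishes along every edge of CL(n), i.e. V is supported on
  pairs of commuting Clifford monomials.  Write V = U^T U with a triangular (Cholesky)
  factor U whose nonzero rows form a pivot set P.  Then
    (1) card P <= rank V, since the columns of V indexed by P are independent;
    (2) N^2 = (tr V)^2 <= card P * |V|_F^2, by Cauchy-Schwarz on the diagonal of U U^T;
    (3) |V|_F^2 <= sqrt(2^(n+1)) * N, because the commutation signs form a Walsh-type
        matrix on the subsets of {1..n} whose quadratic form is at most sqrt(2^(n+1)) times
        the squared norm, and V is invariant under multiplication by these signs entrywise.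
  Together N <= card P * sqrt(2^(n+1)), which gives card P >= (4n - 8)/3 for n >= 3.
\<close>

section \<open>Quadratic forms and Cholesky factors\<close>

text \<open>The quadratic form of a real N x N array A, written with explicit index ranges so that
  induction on the dimension is easy.\<close>

definition quad_form :: "nat \<Rightarrow> (nat \<Rightarrow> nat \<Rightarrow> real) \<Rightarrow> (nat \<Rightarrow> real) \<Rightarrow> real" where
  "quad_form N A x = (\<Sum>i<N. \<Sum>j<N. x i * A i j * x j)"

lemma quad_form_cong: "(\<And>i. i < N \<Longrightarrow> x i = y i) \<Longrightarrow> quad_form N A x = quad_form N A y"
  unfolding quad_form_def by (intro sum.cong refl) auto

lemma quad_form_extend:
  "quad_form (Suc N) A (\<lambda>k. if k < N then x k else t) =
   quad_form N A x + t * (\<Sum>i<N. A N i * x i) + t * (\<Sum>i<N. A i N * x i) + t * A N N * t"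
proof -
  have "quad_form (Suc N) A (\<lambda>k. if k < N then x k else t)
      = quad_form N A (\<lambda>k. if k < N then x k else t) + t * (\<Sum>i<N. A N i * (if i < N then x i else t))
        + t * (\<Sum>i<N. A i N * (if i < N then x i else t)) + t * A N N * t"
    unfolding quad_form_def by (simp add: sum.distrib sum_distrib_left algebra_simps)
  also have "quad_form N A (\<lambda>k. if k < N then x k else t) = quad_form N A x"
    by (rule quad_form_cong) auto
  moreover have "(\<Sum>i<N. A N i * (if i < N then x i else t)) = (\<Sum>i<N. A N i * x i)"
    by (rule sum.cong) auto
  moreover have "(\<Sum>i<N. A i N * (if i < N then x i else t)) = (\<Sum>i<N. A i N * x i)"
    by (rule sum.cong) auto
  ultimately show ?thesis by simp
qed

lemma quad_form_restrict:
  assumes "\<forall>x. quad_form (Suc N) A x \<ge> 0"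
  shows "\<forall>x. quad_form N A x \<ge> 0"
proof
  fix x
  have "quad_form N A x = quad_form (Suc N) A (\<lambda>k. if k < N then x k else 0)"
    unfolding quad_form_extend by simp
  then show "quad_form N A x \<ge> 0" using assms by simp
qed

lemma quad_form_last_diag_nonneg:
  assumes "\<forall>x. quad_form (Suc N) A x \<ge> 0"
  shows "A N N \<ge> 0"
proof -
  have "quad_form (Suc N) A (\<lambda>k. if k < N then 0 else 1) = A N N"
    unfolding quad_form_extend by (simp add: quad_form_def)
  then show ?thesis using assms by metis
qed

text \<open>If the last diagonal entry is positive, the Schur complement of that entry is again
  positive semidefinite: evaluate the big form at the vector completed by -r/A(N,N).\<close>

lemma quad_form_schur_complement:
  assumes sym: "\<forall>i<Suc N. \<forall>j<Suc N. A i j = A j i"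
    and psd: "\<forall>x. quad_form (Suc N) A x \<ge> 0" and pos: "A N N > 0"
  shows "\<forall>x. quad_form N (\<lambda>i j. A i j - A i N * A j N / A N N) x \<ge> 0"
proof
  fix x
  define r where "r = (\<Sum>i<N. A N i * x i)"
  have r': "(\<Sum>i<N. A i N * x i) = r" unfolding r_def using sym by (intro sum.cong) auto
  have "quad_form N (\<lambda>i j. A i j - A i N * A j N / A N N) x
      = quad_form N A x - (\<Sum>i<N. A i N * x i) * (\<Sum>j<N. A j N * x j) / A N N"
    unfolding quad_form_def
    by (simp add: algebra_simps sum_subtractf sum_distrib_left sum_distrib_right sum_divide_distrib)
  also have "\<dots> = quad_form (Suc N) A (\<lambda>k. if k < N then x k else - r / A N N)"
    using pos unfolding quad_form_extend r' r_def[symmetric] by (simp add: field_simps power2_eq_square)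
  finally show "quad_form N (\<lambda>i j. A i j - A i N * A j N / A N N) x \<ge> 0" using psd by simp
qed

text \<open>If the last diagonal entry vanishes, so does the whole last column (otherwise the
  form would take a negative value on a suitable two-term vector).\<close>

lemma quad_form_zero_diag_column:
  assumes sym: "\<forall>i<Suc N. \<forall>j<Suc N. A i j = A j i"
    and psd: "\<forall>x. quad_form (Suc N) A x \<ge> 0" and zero: "A N N = 0" and i: "i < N"
  shows "A i N = 0"
proof (rule ccontr)
  assume nz: "A i N \<noteq> 0"
  define t where "t = - (A i i + 1) / (2 * A i N)"
  have "0 \<le> quad_form (Suc N) A (\<lambda>k. if k < N then (if k = i then 1 else 0) else t)"
    using psd by blast
  also have "\<dots> = A i i + 2 * t * A i N"
    using i sym zero unfolding quad_form_extend
    by (simp add: quad_form_def if_distrib[of "\<lambda>y. y * _"] if_distrib[of "\<lambda>y. _ * y"] cong: if_cong)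
  also have "\<dots> = -1" using nz by (simp add: t_def field_simps)
  finally show False by simp
qed

text \<open>A Cholesky factor of A: A = U^T U, where row a of U vanishes for a outside the pivot set
  P, U is triangular (U a i = 0 for a < i) and has nonzero pivots U a a for a in P.
  The number of pivots card P will be compared both with the rank of A and with the
  ratio (trace A)^2 / |A|_F^2.\<close>

definition cholesky_factor ::
    "nat \<Rightarrow> (nat \<Rightarrow> nat \<Rightarrow> real) \<Rightarrow> (nat \<Rightarrow> nat \<Rightarrow> real) \<Rightarrow> nat set \<Rightarrow> bool" where
  "cholesky_factor N A U P \<longleftrightarrow> P \<subseteq> {..<N} \<and>
     (\<forall>i<N. \<forall>j<N. A i j = (\<Sum>a<N. U a i * U a j)) \<and>
     (\<forall>a i. a \<notin> P \<longrightarrow> U a i = 0) \<and> (\<forall>a i. a < i \<longrightarrow> U a i = 0) \<and> (\<forall>a\<in>P. U a a \<noteq> 0)"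

lemma cholesky_factor_Suc:
  assumes fB: "cholesky_factor N B U P"
    and A: "\<forall>i<Suc N. \<forall>j<Suc N. A i j = (if i < N \<and> j < N then B i j else 0) + u i * u j"
    and u_tri: "\<forall>i>N. u i = 0" and u_zero: "u N = 0 \<Longrightarrow> \<forall>i. u i = 0"
  shows "cholesky_factor (Suc N) A (\<lambda>a i. if a = N then u i else U a i)
           (if u N = 0 then P else insert N P)"
proof -
  have P: "P \<subseteq> {..<N}" and fac: "\<forall>i<N. \<forall>j<N. B i j = (\<Sum>a<N. U a i * U a j)"
    and rows: "\<forall>a i. a \<notin> P \<longrightarrow> U a i = 0" and tri: "\<forall>a i. a < i \<longrightarrow> U a i = 0"
    and piv: "\<forall>a\<in>P. U a a \<noteq> 0"
    using fB unfolding cholesky_factor_def by blast+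
  have last_col: "(\<Sum>a<N. U a N * U a j) = 0" "(\<Sum>a<N. U a i * U a N) = 0" for i j
    using tri by (auto intro!: sum.neutral)
  have "A i j = (\<Sum>a<Suc N. (if a = N then u i else U a i) * (if a = N then u j else U a j))"
    if "i < Suc N" "j < Suc N" for i j
    using that A fac last_col by (cases "i < N \<and> j < N") (auto simp: less_Suc_eq)
  moreover have "N \<notin> P" using P by auto
  ultimately show ?thesis
    unfolding cholesky_factor_def using P rows tri piv u_tri u_zero by auto
qed

lemma cholesky_factor_Suc_pos:
  assumes sym: "\<forall>i<Suc N. \<forall>j<Suc N. A i j = A j i" and pos: "A N N > 0"
    and fB: "cholesky_factor N (\<lambda>i j. A i j - A i N * A j N / A N N) U P"
  shows "\<exists>U P. cholesky_factor (Suc N) A U P"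
proof -
  define u where "u i = (if i \<le> N then A i N / sqrt (A N N) else 0)" for i
  have uu: "u i * u j = A i N * A j N / A N N" if "i \<le> N" "j \<le> N" for i j
  proof -
    have "sqrt (A N N) * sqrt (A N N) = A N N" using pos by simp
    then show ?thesis using that by (simp add: u_def)
  qed
  have "A i j = (if i < N \<and> j < N then A i j - A i N * A j N / A N N else 0) + u i * u j"
    if "i < Suc N" "j < Suc N" for i j
  proof (cases "i < N \<and> j < N")
    case True
    then show ?thesis using uu[of i j] by simp
  next
    case False
    then have "i = N \<or> j = N" using that by auto
    moreover have "A N j = A j N" "A i N = A N i" using sym that by auto
    ultimately show ?thesis using uu[of i j] that pos by auto
  qed
  moreover have "\<forall>i>N. u i = 0" by (simp add: u_def)
  moreover have "u N \<noteq> 0" using pos by (simp add: u_def)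
  ultimately show ?thesis using cholesky_factor_Suc[OF fB, of A u] by blast
qed

text \<open>The step for a vanishing last diagonal entry: the last row and column vanish, so a factor
  of the leading block is already a factor of A.\<close>

lemma cholesky_factor_Suc_zero:
  assumes sym: "\<forall>i<Suc N. \<forall>j<Suc N. A i j = A j i"
    and psd: "\<forall>x. quad_form (Suc N) A x \<ge> 0" and zero: "A N N = 0"
    and fA: "cholesky_factor N A U P"
  shows "\<exists>U P. cholesky_factor (Suc N) A U P"
proof -
  have col: "A i N = 0" "A N i = 0" if "i < Suc N" for i
  proof -
    show "A i N = 0"
      using that zero quad_form_zero_diag_column[OF sym psd zero, of i] by (cases "i = N") auto
    then show "A N i = 0" using sym that by auto
  qed
  have "A i j = (if i < N \<and> j < N then A i j else 0) + 0 * 0"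
    if "i < Suc N" "j < Suc N" for i j
    using that col by (auto simp: less_Suc_eq)
  then have "cholesky_factor (Suc N) A (\<lambda>a i. if a = N then 0 else U a i) P"
    using cholesky_factor_Suc[OF fA, of A "\<lambda>_. 0"] by auto
  then show ?thesis by blast
qed

lemma cholesky_factor_exists:
  assumes "\<forall>i<N. \<forall>j<N. A i j = A j i" and "\<forall>x. quad_form N A x \<ge> 0"
  shows "\<exists>U P. cholesky_factor N A U P"
  using assms
proof (induction N arbitrary: A)
  case 0
  show ?case unfolding cholesky_factor_def by auto
next
  case (Suc N)
  note sym = Suc.prems(1) and psd = Suc.prems(2)
  have sym': "\<forall>i<N. \<forall>j<N. A i j = A j i" using sym by simp
  show ?case
  proof (cases "A N N > 0")
    case True
    have "\<forall>i<N. \<forall>j<N. A i j - A i N * A j N / A N N = A j i - A j N * A i N / A N N"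
      using sym' by (simp add: mult.commute)
    then obtain U P where "cholesky_factor N (\<lambda>i j. A i j - A i N * A j N / A N N) U P"
      using Suc.IH[of "\<lambda>i j. A i j - A i N * A j N / A N N"]
        quad_form_schur_complement[OF sym psd True] by blast
    then show ?thesis by (rule cholesky_factor_Suc_pos[OF sym True])
  next
    case False
    then have zero: "A N N = 0" using quad_form_last_diag_nonneg[OF psd] by simp
    obtain U P where "cholesky_factor N A U P"
      using Suc.IH[OF sym' quad_form_restrict[OF psd]] by blast
    then show ?thesis by (rule cholesky_factor_Suc_zero[OF sym psd zero])
  qed
qed

lemma gram_quad_form:
  assumes fac: "\<forall>i<N. \<forall>j<N. A i j = (\<Sum>a<N. U a i * U a j)"
  shows "quad_form N A c = (\<Sum>a<N. (\<Sum>x<N. U a x * c x)\<^sup>2)"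
proof -
  have "quad_form N A c = (\<Sum>x<N. \<Sum>y<N. \<Sum>a<N. c x * U a x * (U a y * c y))"
    unfolding quad_form_def using fac by (intro sum.cong refl) (simp add: sum_distrib_left sum_distrib_right mult.assoc)
  also have "\<dots> = (\<Sum>x<N. \<Sum>a<N. \<Sum>y<N. c x * U a x * (U a y * c y))"
    by (rule sum.cong[OF refl], rule sum.swap)
  also have "\<dots> = (\<Sum>a<N. \<Sum>x<N. \<Sum>y<N. c x * U a x * (U a y * c y))"
    by (rule sum.swap)
  also have "\<dots> = (\<Sum>a<N. (\<Sum>x<N. U a x * c x)\<^sup>2)"
    by (simp add: power2_eq_square sum_product mult_ac)
  finally show ?thesis .
qed

lemma sum_swap4:
  fixes f :: "nat \<Rightarrow> nat \<Rightarrow> nat \<Rightarrow> nat \<Rightarrow> real"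
  shows "(\<Sum>x<N. \<Sum>y<N. \<Sum>a<N. \<Sum>b<N. f x y a b) = (\<Sum>a<N. \<Sum>b<N. \<Sum>x<N. \<Sum>y<N. f x y a b)"
proof -
  have "(\<Sum>x<N. \<Sum>y<N. \<Sum>a<N. \<Sum>b<N. f x y a b) = (\<Sum>x<N. \<Sum>a<N. \<Sum>y<N. \<Sum>b<N. f x y a b)"
    by (rule sum.cong[OF refl], rule sum.swap)
  also have "\<dots> = (\<Sum>x<N. \<Sum>a<N. \<Sum>b<N. \<Sum>y<N. f x y a b)"
    by (rule sum.cong[OF refl], rule sum.cong[OF refl], rule sum.swap)
  also have "\<dots> = (\<Sum>a<N. \<Sum>x<N. \<Sum>b<N. \<Sum>y<N. f x y a b)"
    by (rule sum.swap)
  also have "\<dots> = (\<Sum>a<N. \<Sum>b<N. \<Sum>x<N. \<Sum>y<N. f x y a b)"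
    by (rule sum.cong[OF refl], rule sum.swap)
  finally show ?thesis .
qed

text \<open>A kernel vector of A supported on the pivot set vanishes: the first nonzero coordinate p
  would make the p-th square in the sum of squares of gram_quad_form nonzero.\<close>

lemma cholesky_kernel_trivial:
  assumes fA: "cholesky_factor N A U P"
    and supp: "\<forall>j. j \<notin> P \<longrightarrow> c j = 0" and ker: "\<forall>x<N. (\<Sum>j<N. A x j * c j) = 0"
  shows "c j = 0"
proof (rule ccontr)
  assume "c j \<noteq> 0"
  have P: "P \<subseteq> {..<N}" and fac: "\<forall>i<N. \<forall>j<N. A i j = (\<Sum>a<N. U a i * U a j)"
    and tri: "\<forall>a i. a < i \<longrightarrow> U a i = 0" and piv: "\<forall>a\<in>P. U a a \<noteq> 0"
    using fA unfolding cholesky_factor_def by blast+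
  define p where "p = (LEAST j. c j \<noteq> 0)"
  have cp: "c p \<noteq> 0" unfolding p_def by (rule LeastI) fact
  have below: "c x = 0" if "x < p" for x using not_less_Least[OF that[unfolded p_def]] by simp
  have pP: "p \<in> P" and pN: "p < N" using cp supp P by auto
  have "(\<Sum>a<N. (\<Sum>x<N. U a x * c x)\<^sup>2) = quad_form N A c"
    by (rule gram_quad_form[OF fac, symmetric])
  also have "\<dots> = (\<Sum>x<N. c x * (\<Sum>j<N. A x j * c j))"
    unfolding quad_form_def by (simp add: sum_distrib_left mult.assoc)
  also have "\<dots> = 0" using ker by simp
  finally have "(\<Sum>x<N. U p x * c x)\<^sup>2 = 0"
    using pN by (subst (asm) sum_nonneg_eq_0_iff) auto
  moreover have "(\<Sum>x<N. U p x * c x) = (\<Sum>x\<in>{p}. U p x * c x)"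
  proof (rule sum.mono_neutral_right)
    show "\<forall>x\<in>{..<N} - {p}. U p x * c x = 0"
      using below tri by (metis linorder_neqE_nat mult_zero_left mult_zero_right insertI1 Diff_iff)
  qed (use pN in auto)
  ultimately show False using cp piv pP by simp
qed

lemma gram_frobenius:
  fixes U :: "nat \<Rightarrow> nat \<Rightarrow> real"
  shows "(\<Sum>x<N. \<Sum>y<N. (\<Sum>a<N. U a x * U a y)\<^sup>2) = (\<Sum>a<N. \<Sum>b<N. (\<Sum>x<N. U a x * U b x)\<^sup>2)"
proof -
  have "(\<Sum>x<N. \<Sum>y<N. (\<Sum>a<N. U a x * U a y)\<^sup>2)
      = (\<Sum>x<N. \<Sum>y<N. \<Sum>a<N. \<Sum>b<N. U a x * U b x * (U a y * U b y))"
    by (simp add: power2_eq_square sum_product algebra_simps)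
  also have "\<dots> = (\<Sum>a<N. \<Sum>b<N. \<Sum>x<N. \<Sum>y<N. U a x * U b x * (U a y * U b y))"
    by (rule sum_swap4)
  also have "\<dots> = (\<Sum>a<N. \<Sum>b<N. (\<Sum>x<N. U a x * U b x)\<^sup>2)"
    by (simp add: power2_eq_square sum_product algebra_simps)
  finally show ?thesis .
qed

lemma sum_squared_le_card_sum_squares:
  fixes f :: "'a \<Rightarrow> real"
  shows "(\<Sum>a\<in>P. f a)\<^sup>2 \<le> real (card P) * (\<Sum>a\<in>P. (f a)\<^sup>2)"
proof -
  have "0 \<le> (\<Sum>a\<in>P. \<Sum>b\<in>P. (f a - f b)\<^sup>2)" by (intro sum_nonneg) auto
  also have "\<dots> = (\<Sum>a\<in>P. \<Sum>b\<in>P. (f a)\<^sup>2 + (f b)\<^sup>2 - 2 * (f a * f b))"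
    by (simp add: power2_eq_square algebra_simps)
  also have "\<dots> = 2 * (real (card P) * (\<Sum>a\<in>P. (f a)\<^sup>2) - (\<Sum>a\<in>P. f a)\<^sup>2)"
    by (simp add: sum.distrib sum_subtractf sum_distrib_left[symmetric] sum_distrib_right[symmetric]
        power2_eq_square algebra_simps)
      (simp add: sum_distrib_left mult_ac)
  finally show ?thesis by simp
qed

text \<open>The trace inequality (tr A)^2 <= card P * |A|_F^2: the trace is the sum of the card P
  diagonal entries of U U^T, and these are bounded by the Frobenius norm of U U^T.\<close>

lemma cholesky_trace_le:
  assumes fA: "cholesky_factor N A U P"
  shows "(\<Sum>x<N. A x x)\<^sup>2 \<le> real (card P) * (\<Sum>x<N. \<Sum>y<N. (A x y)\<^sup>2)"
proof -
  have P: "P \<subseteq> {..<N}" and fac: "\<forall>i<N. \<forall>j<N. A i j = (\<Sum>a<N. U a i * U a j)"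
    and rows: "\<forall>a i. a \<notin> P \<longrightarrow> U a i = 0"
    using fA unfolding cholesky_factor_def by blast+
  define G where "G a b = (\<Sum>x<N. U a x * U b x)" for a b
  have "(\<Sum>x<N. A x x) = (\<Sum>x<N. \<Sum>a<N. U a x * U a x)" using fac by simp
  also have "\<dots> = (\<Sum>a<N. G a a)" unfolding G_def by (rule sum.swap)
  also have "\<dots> = (\<Sum>a\<in>P. G a a)"
    using P rows by (intro sum.mono_neutral_right) (auto simp: G_def)
  finally have trace: "(\<Sum>x<N. A x x) = (\<Sum>a\<in>P. G a a)" .
  have "(\<Sum>a\<in>P. (G a a)\<^sup>2) \<le> (\<Sum>a<N. (G a a)\<^sup>2)"
    using P by (intro sum_mono2) auto
  also have "\<dots> \<le> (\<Sum>a<N. \<Sum>b<N. (G a b)\<^sup>2)"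
    by (intro sum_mono member_le_sum) auto
  also have "\<dots> = (\<Sum>x<N. \<Sum>y<N. (\<Sum>a<N. U a x * U a y)\<^sup>2)"
    unfolding G_def by (rule gram_frobenius[symmetric])
  also have "\<dots> = (\<Sum>x<N. \<Sum>y<N. (A x y)\<^sup>2)"
    using fac by (intro sum.cong refl) simp
  finally have "(\<Sum>a\<in>P. (G a a)\<^sup>2) \<le> (\<Sum>x<N. \<Sum>y<N. (A x y)\<^sup>2)" .
  then show ?thesis
    using sum_squared_le_card_sum_squares[of "\<lambda>a. G a a" P] unfolding trace
    by (simp add: mult_left_mono order_trans)
qed

section \<open>Pivots versus rank\<close>

text \<open>Throughout this section, P is a set of column indices of V such that no nonzero vector
  supported on P lies in the kernel of V.  First, the columns indexed by P are distinct:
  two equal columns would give the kernel vector e_p - e_q.\<close>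

lemma cols_inj_on_of_kernel:
  fixes V :: "real mat"
  assumes C: "V \<in> carrier_mat N N" and P: "P \<subseteq> {..<N}"
    and ker: "\<And>c. \<forall>j. j \<notin> P \<longrightarrow> c j = 0 \<Longrightarrow> \<forall>x<N. (\<Sum>j<N. V $$ (x, j) * c j) = 0 \<Longrightarrow> \<forall>j. c j = 0"
  shows "inj_on (col V) P"
proof
  fix p q assume p: "p \<in> P" and q: "q \<in> P" and eq: "col V p = col V q"
  define c where "c j = (if j = p then 1 else 0) - (if j = q then 1 else 0 :: real)" for j
  have "\<forall>j. j \<notin> P \<longrightarrow> c j = 0" using p q by (simp add: c_def)
  moreover have "\<forall>x<N. (\<Sum>j<N. V $$ (x, j) * c j) = 0"
  proof (intro allI impI)
    fix x assume x: "x < N"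
    have "p < N" "q < N" using p q P by auto
    have "V $$ (x, j) * c j = (if j = p then V $$ (x, j) else 0) - (if j = q then V $$ (x, j) else 0)"
      for j by (simp add: c_def)
    then have "(\<Sum>j<N. V $$ (x, j) * c j) = V $$ (x, p) - V $$ (x, q)"
      using \<open>p < N\<close> \<open>q < N\<close> by (simp add: sum_subtractf)
    moreover have "col V p $ x = col V q $ x" using eq by simp
    then have "V $$ (x, p) = V $$ (x, q)" using x C by (simp add: col_def)
    ultimately show "(\<Sum>j<N. V $$ (x, j) * c j) = 0" by simp
  qed
  ultimately have "c p = 0" using ker by blast
  then show "p = q" unfolding c_def by (auto split: if_splits)
qed

text \<open>Second, the submatrix formed by the columns listed in ps (a list of distinct elements of
  P) has trivial kernel: a kernel vector w of it spreads to a kernel vector of V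
  supported on P.\<close>

lemma cols_submatrix_kernel:
  fixes V :: "real mat"
  assumes C: "V \<in> carrier_mat N N" and P: "P \<subseteq> {..<N}"
    and ker: "\<And>c. \<forall>j. j \<notin> P \<longrightarrow> c j = 0 \<Longrightarrow> \<forall>x<N. (\<Sum>j<N. V $$ (x, j) * c j) = 0 \<Longrightarrow> \<forall>j. c j = 0"
    and ps: "distinct ps" "set ps = P"
    and w: "w \<in> carrier_vec (length ps)" "mat_of_cols N (map (col V) ps) *\<^sub>v w = 0\<^sub>v N"
  shows "w = 0\<^sub>v (length ps)"
proof -
  define pos where "pos = inv_into {..<length ps} ((!) ps)"
  have pos: "pos (ps ! k) = k" if "k < length ps" for k
    unfolding pos_def using that ps(1) by (intro inv_into_f_f inj_on_nth) auto
  define c where "c j = (if j \<in> P then w $ pos j else 0)" for j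
  have c_nth: "c (ps ! k) = w $ k" if "k < length ps" for k
    using that ps pos by (auto simp: c_def)
  have "(\<Sum>j<N. V $$ (x, j) * c j) = 0" if x: "x < N" for x
  proof -
    have "(\<Sum>j<N. V $$ (x, j) * c j) = (\<Sum>j\<in>set ps. V $$ (x, j) * c j)"
      using ps P by (intro sum.mono_neutral_right) (auto simp: c_def)
    also have "\<dots> = (\<Sum>k<length ps. V $$ (x, ps ! k) * w $ k)"
      using sum.reindex_bij_betw[OF bij_betw_nth[OF ps(1) refl refl], of "\<lambda>j. V $$ (x, j) * c j"]
      by (simp add: c_nth atLeast0LessThan)
    also have "\<dots> = (mat_of_cols N (map (col V) ps) *\<^sub>v w) $ x"
      using x C w(1) ps P
      by (auto simp: scalar_prod_def mat_of_cols_index col_def atLeast0LessThan intro!: sum.cong)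
    finally show ?thesis using w(2) x by simp
  qed
  moreover have "\<forall>j. j \<notin> P \<longrightarrow> c j = 0" by (simp add: c_def)
  ultimately have "\<forall>j. c j = 0" using ker by blast
  then show ?thesis using w(1) c_nth by (intro eq_vecI) auto
qed

lemma card_le_mat_rank:
  fixes V :: "real mat"
  assumes C: "V \<in> carrier_mat N N" and P: "P \<subseteq> {..<N}"
    and ker: "\<And>c. \<forall>j. j \<notin> P \<longrightarrow> c j = 0 \<Longrightarrow> \<forall>x<N. (\<Sum>j<N. V $$ (x, j) * c j) = 0 \<Longrightarrow> \<forall>j. c j = 0"
  shows "card P \<le> mat_rank V"
proof -
  interpret vs: vec_space "TYPE(real)" N .
  define ps where "ps = sorted_list_of_set P"
  have "finite P" using P finite_subset by blast
  then have ps: "distinct ps" "set ps = P" unfolding ps_def by auto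
  define B where "B = mat_of_cols N (map (col V) ps)"
  have BC: "B \<in> carrier_mat N (length ps)"
    unfolding B_def using mat_of_cols_carrier(1)[of N "map (col V) ps"] by simp
  have cB: "cols B = map (col V) ps" unfolding B_def using C by (intro cols_mat_of_cols) auto
  have dB: "distinct (cols B)"
    unfolding cB using ps cols_inj_on_of_kernel[OF C P ker] by (simp add: distinct_map)
  have "vs.lin_indpt (set (cols B))"
  proof
    assume "vs.lin_dep (set (cols B))"
    then obtain w where "w \<in> carrier_vec (length ps)" "w \<noteq> 0\<^sub>v (length ps)" "B *\<^sub>v w = 0\<^sub>v N"
      using vs.lin_depE[OF BC _ dB] by blast
    then show False using cols_submatrix_kernel[OF C P ker ps] unfolding B_def by blast
  qed
  moreover have "set (cols B) \<subseteq> set (cols V)" unfolding cB using ps P C by (force simp: cols_def)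
  ultimately have "card (set (cols B)) \<le> vs.rank V" by (intro vs.rank_ge_card_indpt[OF C])
  moreover have "card (set (cols B)) = card P"
    using distinct_card[OF dB] distinct_card[OF ps(1)] ps(2) cB by simp
  ultimately show ?thesis unfolding mat_rank_def using C by simp
qed

section \<open>The Clifford sign matrix\<close>

text \<open>clifford_sign X Y is +1 if Y_X and Y_Y commute in the Clifford algebra and -1 if they
  anticommute.  Viewed as a matrix indexed by all subsets of a finite set S it is a
  Walsh-type matrix, which is why its quadratic form is small.\<close>

definition clifford_sign :: "nat set \<Rightarrow> nat set \<Rightarrow> real" where
  "clifford_sign X Y = (-1) ^ (card X * card Y + card (X \<inter> Y))"

lemma clifford_sign_pair_prod:
  assumes "finite X"
  shows "clifford_sign X A * clifford_sign X B =
    (\<Prod>i\<in>X. (-1) ^ (card A + of_bool (i \<in> A) + card B + of_bool (i \<in> B)))"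
proof -
  have split: "card X * card Y + card (X \<inter> Y) = (\<Sum>i\<in>X. card Y + of_bool (i \<in> Y))" for Y
    using assms by (simp add: sum.distrib sum.inter_restrict[symmetric] of_bool_def)
  have "clifford_sign X A * clifford_sign X B =
      (-1) ^ (\<Sum>i\<in>X. card A + of_bool (i \<in> A) + (card B + of_bool (i \<in> B)))"
    unfolding clifford_sign_def power_add[symmetric] split sum.distrib ..
  then show ?thesis unfolding power_sum by (simp add: add.assoc)
qed

definition sign_corr :: "nat set \<Rightarrow> nat set \<Rightarrow> nat set \<Rightarrow> real" where
  "sign_corr S A B = (\<Sum>X\<in>Pow S. clifford_sign X A * clifford_sign X B)"

lemma sign_corr_prod:
  assumes "finite S"
  shows "sign_corr S A B =
    (\<Prod>i\<in>S. if even (card A + of_bool (i \<in> A) + card B + of_bool (i \<in> B)) then 2 else 0)"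
proof -
  have "sign_corr S A B = (\<Sum>X\<in>Pow S.
      (\<Prod>i\<in>X. (-1) ^ (card A + of_bool (i \<in> A) + card B + of_bool (i \<in> B))) * (\<Prod>i\<in>S - X. 1))"
    unfolding sign_corr_def
    by (intro sum.cong refl) (simp add: clifford_sign_pair_prod finite_subset[OF _ assms])
  also have "\<dots> = (\<Prod>i\<in>S. (-1) ^ (card A + of_bool (i \<in> A) + card B + of_bool (i \<in> B)) + 1)"
    by (rule prod_add[symmetric, OF assms])
  also have "\<dots> = (\<Prod>i\<in>S.
      if even (card A + of_bool (i \<in> A) + card B + of_bool (i \<in> B)) then 2 else 0)"
    by (intro prod.cong refl) simp
  finally show ?thesis .
qed

lemma sign_corr_nonneg: "finite S \<Longrightarrow> 0 \<le> sign_corr S A B"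
  by (simp add: sign_corr_prod prod_nonneg)

lemma sign_corr_le:
  assumes "finite S" shows "sign_corr S A B \<le> 2 ^ card S"
proof -
  have "sign_corr S A B \<le> (\<Prod>i\<in>S. 2)"
    unfolding sign_corr_prod[OF assms] by (intro prod_mono) auto
  then show ?thesis by simp
qed

lemma sign_corr_sym: "sign_corr S A B = sign_corr S B A"
  unfolding sign_corr_def by (simp add: mult.commute)

lemma sign_corr_nonzero:
  assumes S: "finite S" and A: "A \<subseteq> S" and B: "B \<subseteq> S" and nz: "sign_corr S A B \<noteq> 0"
  shows "B = A \<or> B = S - A"
proof -
  have ev: "even (card A + of_bool (i \<in> A) + card B + of_bool (i \<in> B))" if "i \<in> S" for i
  proof (rule ccontr)
    assume "\<not> ?thesis"
    then have "(if even (card A + of_bool (i \<in> A) + card B + of_bool (i \<in> B))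
      then 2 else 0 :: real) = 0" by (simp only: if_False)
    then show False using nz S that by (simp only: sign_corr_prod prod_zero_iff) blast
  qed
  show ?thesis
  proof (cases "B = A")
    case False
    then obtain i where "i \<in> A \<and> i \<notin> B \<or> i \<in> B \<and> i \<notin> A" by blast
    then have "odd (card A + card B)" using ev[of i] A B by auto
    then have "\<forall>j\<in>S. j \<in> B \<longleftrightarrow> j \<notin> A"
      using ev by (auto split: if_splits)
    then show ?thesis using A B by blast
  qed simp
qed

lemma sign_corr_row_sum:
  fixes T :: "nat \<Rightarrow> nat set"
  assumes inj: "inj_on T {..<N}" and sub: "\<forall>x<N. T x \<subseteq> S" and S: "finite S" and y: "y < N"
  shows "(\<Sum>z<N. sign_corr S (T y) (T z)) \<le> 2 * 2 ^ card S"
proof -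
  define Z where "Z = {z. z < N \<and> sign_corr S (T y) (T z) \<noteq> 0}"
  define W where "W = {z. z < N \<and> T z = S - T y}"
  have "Z \<subseteq> insert y W"
  proof
    fix z assume "z \<in> Z"
    then have z: "z < N" "sign_corr S (T y) (T z) \<noteq> 0" unfolding Z_def by auto
    then have "T z = T y \<or> T z = S - T y" using sign_corr_nonzero[OF S] sub y by blast
    then show "z \<in> insert y W" using inj z y unfolding W_def inj_on_def by auto
  qed
  moreover have "card W \<le> 1"
    unfolding W_def using inj by (auto simp: card_le_Suc0_iff_eq inj_on_def)
  ultimately have "card Z \<le> 2"
    using card_mono[of "insert y W" Z] card_insert_le_m1[of 2 W y] unfolding W_def by force
  have "(\<Sum>z<N. sign_corr S (T y) (T z)) = (\<Sum>z\<in>Z. sign_corr S (T y) (T z))"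
    by (intro sum.mono_neutral_right) (auto simp: Z_def)
  also have "\<dots> \<le> (\<Sum>z\<in>Z. 2 ^ card S)" by (intro sum_mono sign_corr_le S)
  also have "\<dots> \<le> 2 * 2 ^ card S" using \<open>card Z \<le> 2\<close> by simp
  finally show ?thesis .
qed

lemma form_le_weighted_row_sums:
  fixes C :: "nat \<Rightarrow> nat \<Rightarrow> real" and g :: "nat \<Rightarrow> real"
  assumes nonneg: "\<And>y z. 0 \<le> C y z" and sym: "\<And>y z. C y z = C z y"
  shows "(\<Sum>y<N. \<Sum>z<N. g y * g z * C y z) \<le> (\<Sum>y<N. (g y)\<^sup>2 * (\<Sum>z<N. C y z))"
proof -
  have swap: "(\<Sum>y<N. \<Sum>z<N. (g z)\<^sup>2 * C y z) = (\<Sum>y<N. \<Sum>z<N. (g y)\<^sup>2 * C y z)"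
    by (subst sum.swap) (simp add: sym)
  have "0 \<le> (\<Sum>y<N. \<Sum>z<N. (g y - g z)\<^sup>2 * C y z)"
    using nonneg by (intro sum_nonneg mult_nonneg_nonneg) auto
  also have "\<dots> = (\<Sum>y<N. \<Sum>z<N. (g y)\<^sup>2 * C y z) + (\<Sum>y<N. \<Sum>z<N. (g z)\<^sup>2 * C y z)
      - 2 * (\<Sum>y<N. \<Sum>z<N. g y * g z * C y z)"
    by (simp add: power2_eq_square algebra_simps sum.distrib sum_subtractf sum_distrib_left)
  finally show ?thesis unfolding swap by (simp add: sum_distrib_left[symmetric])
qed

lemma sign_transform_energy:
  fixes T :: "nat \<Rightarrow> nat set" and g :: "nat \<Rightarrow> real"
  assumes inj: "inj_on T {..<N}" and sub: "\<forall>x<N. T x \<subseteq> S" and S: "finite S"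
  shows "(\<Sum>X\<in>Pow S. (\<Sum>y<N. clifford_sign X (T y) * g y)\<^sup>2) \<le> 2 ^ (card S + 1) * (\<Sum>y<N. (g y)\<^sup>2)"
proof -
  define C where "C y z = sign_corr S (T y) (T z)" for y z
  have "(\<Sum>X\<in>Pow S. (\<Sum>y<N. clifford_sign X (T y) * g y)\<^sup>2)
      = (\<Sum>X\<in>Pow S. \<Sum>y<N. \<Sum>z<N. g y * g z * (clifford_sign X (T y) * clifford_sign X (T z)))"
    by (intro sum.cong refl) (simp add: power2_eq_square sum_product algebra_simps)
  also have "\<dots> = (\<Sum>y<N. \<Sum>z<N. \<Sum>X\<in>Pow S. g y * g z * (clifford_sign X (T y) * clifford_sign X (T z)))"
    by (subst sum.swap, rule sum.cong[OF refl], rule sum.swap)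
  also have "\<dots> = (\<Sum>y<N. \<Sum>z<N. g y * g z * C y z)"
    unfolding C_def sign_corr_def by (simp add: sum_distrib_left)
  also have "\<dots> \<le> (\<Sum>y<N. (g y)\<^sup>2 * (\<Sum>z<N. C y z))"
    by (rule form_le_weighted_row_sums) (auto simp: C_def sign_corr_nonneg[OF S] sign_corr_sym)
  also have "\<dots> \<le> (\<Sum>y<N. (g y)\<^sup>2 * (2 * 2 ^ card S))"
    unfolding C_def by (intro sum_mono mult_left_mono sign_corr_row_sum[OF inj sub S]) auto
  finally show ?thesis by (simp add: sum_distrib_left sum_distrib_right mult_ac)
qed

text \<open>Consequently the quadratic form of the sign matrix on distinct subsets of S is bounded
  by sqrt(2^(|S|+1)) |g|^2; this follows from 2ab <= lam a^2 + b^2 / lam.\<close>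

lemma clifford_sign_form_le:
  fixes T :: "nat \<Rightarrow> nat set" and g :: "nat \<Rightarrow> real"
  assumes inj: "inj_on T {..<N}" and sub: "\<forall>x<N. T x \<subseteq> S" and S: "finite S"
  shows "(\<Sum>x<N. \<Sum>y<N. g x * clifford_sign (T x) (T y) * g y) \<le> sqrt (2 ^ (card S + 1)) * (\<Sum>x<N. (g x)\<^sup>2)"
proof -
  define F where "F X = (\<Sum>y<N. clifford_sign X (T y) * g y)" for X
  define lam where "lam = sqrt (2 ^ (card S + 1) :: real)"
  have lam: "lam > 0" "lam * lam = 2 ^ (card S + 1)" unfolding lam_def by auto
  have "(\<Sum>x<N. (F (T x))\<^sup>2) = (\<Sum>X\<in>T ` {..<N}. (F X)\<^sup>2)"
    by (simp add: sum.reindex[OF inj])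
  also have "\<dots> \<le> (\<Sum>X\<in>Pow S. (F X)\<^sup>2)"
    using sub S by (intro sum_mono2) auto
  also have "\<dots> \<le> lam * lam * (\<Sum>x<N. (g x)\<^sup>2)"
    unfolding F_def lam(2) by (rule sign_transform_energy[OF inj sub S])
  finally have energy: "(\<Sum>x<N. (F (T x))\<^sup>2) \<le> lam * lam * (\<Sum>x<N. (g x)\<^sup>2)" .
  have amgm: "2 * g x * F (T x) \<le> lam * (g x)\<^sup>2 + (F (T x))\<^sup>2 / lam" for x
  proof -
    have "0 \<le> (lam * g x - F (T x))\<^sup>2 / lam" using lam by simp
    also have "\<dots> = lam * (g x)\<^sup>2 + (F (T x))\<^sup>2 / lam - 2 * g x * F (T x)"
      using lam by (simp add: power2_eq_square field_simps)
    finally show ?thesis by simp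
  qed
  have "2 * (\<Sum>x<N. \<Sum>y<N. g x * clifford_sign (T x) (T y) * g y) = (\<Sum>x<N. 2 * g x * F (T x))"
    unfolding F_def by (simp add: sum_distrib_left mult.assoc)
  also have "\<dots> \<le> (\<Sum>x<N. lam * (g x)\<^sup>2 + (F (T x))\<^sup>2 / lam)"
    by (intro sum_mono amgm)
  also have "\<dots> = lam * (\<Sum>x<N. (g x)\<^sup>2) + (\<Sum>x<N. (F (T x))\<^sup>2) / lam"
    by (simp add: sum.distrib sum_distrib_left sum_divide_distrib)
  also have "\<dots> \<le> lam * (\<Sum>x<N. (g x)\<^sup>2) + lam * lam * (\<Sum>x<N. (g x)\<^sup>2) / lam"
    using energy lam by (intro add_left_mono divide_right_mono) auto
  also have "\<dots> = 2 * (lam * (\<Sum>x<N. (g x)\<^sup>2))" using lam(1) by simp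
  finally show ?thesis unfolding lam_def by simp
qed

section \<open>The Frobenius bound\<close>

text \<open>If A = U^T U has unit diagonal and its entries are supported where the sign is +1, then
  |A|_F^2 = sum_(a,b) of the sign form of the vectors x -> U a x * U b x, hence
  |A|_F^2 <= sqrt(2^(|S|+1)) * N.\<close>

lemma gram_frobenius_le:
  fixes A U :: "nat \<Rightarrow> nat \<Rightarrow> real" and T :: "nat \<Rightarrow> nat set"
  assumes fac: "\<forall>i<N. \<forall>j<N. A i j = (\<Sum>a<N. U a i * U a j)"
    and diag: "\<forall>x<N. A x x = 1"
    and inv: "\<forall>x<N. \<forall>y<N. clifford_sign (T x) (T y) * (A x y)\<^sup>2 = (A x y)\<^sup>2"
    and inj: "inj_on T {..<N}" and sub: "\<forall>x<N. T x \<subseteq> S" and S: "finite S"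
  shows "(\<Sum>x<N. \<Sum>y<N. (A x y)\<^sup>2) \<le> sqrt (2 ^ (card S + 1)) * real N"
proof -
  define lam where "lam = sqrt (2 ^ (card S + 1) :: real)"
  have "(\<Sum>x<N. \<Sum>y<N. (A x y)\<^sup>2) = (\<Sum>x<N. \<Sum>y<N. clifford_sign (T x) (T y) * (A x y)\<^sup>2)"
    using inv by (intro sum.cong refl) auto
  also have "\<dots> = (\<Sum>x<N. \<Sum>y<N. \<Sum>a<N. \<Sum>b<N.
       (U a x * U b x) * clifford_sign (T x) (T y) * (U a y * U b y))"
    using fac by (intro sum.cong refl)
      (simp add: power2_eq_square sum_product sum_distrib_left algebra_simps)
  also have "\<dots> = (\<Sum>a<N. \<Sum>b<N. \<Sum>x<N. \<Sum>y<N.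
       (U a x * U b x) * clifford_sign (T x) (T y) * (U a y * U b y))"
    by (rule sum_swap4)
  also have "\<dots> \<le> (\<Sum>a<N. \<Sum>b<N. lam * (\<Sum>x<N. (U a x * U b x)\<^sup>2))"
    unfolding lam_def by (intro sum_mono clifford_sign_form_le[OF inj sub S])
  also have "\<dots> = lam * (\<Sum>a<N. \<Sum>b<N. \<Sum>x<N. (U a x)\<^sup>2 * (U b x)\<^sup>2)"
    by (simp add: sum_distrib_left power_mult_distrib)
  also have "\<dots> = lam * (\<Sum>a<N. \<Sum>x<N. \<Sum>b<N. (U a x)\<^sup>2 * (U b x)\<^sup>2)"
    by (subst (2) sum.swap) (rule refl)
  also have "\<dots> = lam * (\<Sum>x<N. \<Sum>a<N. \<Sum>b<N. (U a x)\<^sup>2 * (U b x)\<^sup>2)"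
    by (subst sum.swap) (rule refl)
  also have "\<dots> = lam * (\<Sum>x<N. (\<Sum>a<N. (U a x)\<^sup>2) * (\<Sum>b<N. (U b x)\<^sup>2))"
    by (simp add: sum_product)
  also have "\<dots> = lam * (\<Sum>x<N. (A x x)\<^sup>2)"
    using fac by (simp add: power2_eq_square)
  also have "\<dots> = lam * real N" using diag by simp
  finally show ?thesis unfolding lam_def .
qed

lemma cholesky_rank_bound:
  fixes A U :: "nat \<Rightarrow> nat \<Rightarrow> real" and T :: "nat \<Rightarrow> nat set"
  assumes fA: "cholesky_factor N A U P"
    and diag: "\<forall>x<N. A x x = 1"
    and inv: "\<forall>x<N. \<forall>y<N. clifford_sign (T x) (T y) * (A x y)\<^sup>2 = (A x y)\<^sup>2"
    and inj: "inj_on T {..<N}" and sub: "\<forall>x<N. T x \<subseteq> S" and S: "finite S"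
  shows "real N \<le> real (card P) * sqrt (2 ^ (card S + 1))"
proof (cases "N = 0")
  case False
  have fac: "\<forall>i<N. \<forall>j<N. A i j = (\<Sum>a<N. U a i * U a j)"
    using fA unfolding cholesky_factor_def by blast
  have "real N * real N = (\<Sum>x<N. A x x)\<^sup>2" using diag by (simp add: power2_eq_square)
  also have "\<dots> \<le> real (card P) * (\<Sum>x<N. \<Sum>y<N. (A x y)\<^sup>2)"
    by (rule cholesky_trace_le[OF fA])
  also have "\<dots> \<le> real (card P) * (sqrt (2 ^ (card S + 1)) * real N)"
    by (intro mult_left_mono gram_frobenius_le[OF fac diag inv inj sub S]) simp
  finally show ?thesis using False by (simp add: mult.assoc[symmetric])
qed simp

section \<open>Graph games and their optimal solutions\<close>

text \<open>The contribution of an edge with correlation v to the objective of a graph game, up to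
  the common factor 1/(4e).\<close>

definition edge_value :: "real \<Rightarrow> real" where
  "edge_value v = sqrt (2 - 2 * v) + sqrt (2 + 2 * v)"

text \<open>For v > 1 the first square root is negative (HOL's sqrt is odd), and the value is
  below 2.\<close>

lemma edge_value_lt_large:
  fixes v :: real assumes "v > 1"
  shows "edge_value v < 2 * sqrt 2"
proof -
  define a where "a = sqrt (2 * v - 2)"
  have a: "a \<ge> 0" "a\<^sup>2 = 2 * v - 2" using assms unfolding a_def by auto
  have "sqrt (2 + 2 * v) \<le> a + 2"
    using a by (intro real_le_lsqrt) (auto simp: power2_eq_square algebra_simps)
  moreover have "sqrt (2 - 2 * v) = - a" unfolding a_def by (simp add: real_sqrt_minus[symmetric])
  moreover have "1 < sqrt (2::real)" by simp
  ultimately show ?thesis unfolding edge_value_def by linarith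
qed

lemma edge_value_lt:
  fixes v :: real assumes "v \<noteq> 0"
  shows "edge_value v < 2 * sqrt 2"
proof -
  consider "v > 1" | "v < -1" | "-1 \<le> v" "v \<le> 1" by linarith
  then show ?thesis
  proof cases
    case 1 then show ?thesis by (rule edge_value_lt_large)
  next
    case 2
    then have "edge_value (- v) < 2 * sqrt 2" by (intro edge_value_lt_large) simp
    then show ?thesis by (simp add: edge_value_def add.commute)
  next
    case 3
    define a where "a = sqrt (2 - 2 * v)"
    define b where "b = sqrt (2 + 2 * v)"
    have a2: "a\<^sup>2 = 2 - 2 * v" and b2: "b\<^sup>2 = 2 + 2 * v" using 3 unfolding a_def b_def by auto
    have "a \<noteq> b" using a2 b2 assms by auto
    then have "0 < (a - b)\<^sup>2" by simp
    then have "(a + b)\<^sup>2 < (2 * sqrt 2)\<^sup>2"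
      using a2 b2 by (simp add: power2_eq_square algebra_simps)
    then have "a + b < 2 * sqrt 2" by (rule power_less_imp_less_base) simp
    then show ?thesis unfolding edge_value_def a_def b_def .
  qed
qed

lemma edge_value_le: "edge_value v \<le> 2 * sqrt 2"
  using edge_value_lt[of v] by (cases "v = 0") (auto simp: edge_value_def)

lemma graph_edges_mem: "(i, j) \<in> set (graph_edges N E) \<longleftrightarrow> i < j \<and> j < N \<and> E i j"
  unfolding graph_edges_def by auto

lemma concat_map_pairs:
  assumes "\<forall>x\<in>set xs. length (f x) = 2"
  shows "length (concat (map f xs)) = 2 * length xs"
    and "r < 2 * length xs \<Longrightarrow> concat (map f xs) ! r = f (xs ! (r div 2)) ! (r mod 2)"
proof -
  show "length (concat (map f xs)) = 2 * length xs"
    using assms by (induction xs) auto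
  show "r < 2 * length xs \<Longrightarrow> concat (map f xs) ! r = f (xs ! (r div 2)) ! (r mod 2)"
    using assms
  proof (induction xs arbitrary: r)
    case (Cons x xs)
    show ?case
    proof (cases "r < 2")
      case True then show ?thesis using Cons.prems by (auto simp: nth_append)
    next
      case False
      then obtain r' where r: "r = Suc (Suc r')" by (metis add_2_eq_Suc le_add_diff_inverse not_less)
      then show ?thesis using Cons by (auto simp: nth_append)
    qed
  qed simp
qed

lemma graph_game_entries:
  fixes N :: nat and E :: "nat \<Rightarrow> nat \<Rightarrow> bool"
  defines "es \<equiv> graph_edges N E"
  assumes k: "k < length es" and ij: "es ! k = (i, j)" and c: "c < N"
  shows "graph_game N E $$ (2 * k, c) =
           ((if c = i then 1 else 0) + (-1) * (if c = j then 1 else 0)) / (4 * real (length es))"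
    and "graph_game N E $$ (2 * k + 1, c) =
           ((if c = i then 1 else 0) + 1 * (if c = j then 1 else 0)) / (4 * real (length es))"
proof -
  define f where "f = (\<lambda>(i, j). [vec N (\<lambda>k. ((if k = i then 1 else 0) - (if k = j then 1 else 0)) / (4 * real (length es))),
         vec N (\<lambda>k. ((if k = i then 1 else 0) + (if k = j then 1 else 0)) / (4 * real (length es)))] :: real vec list)"
  have len: "\<forall>x\<in>set es. length (f x) = 2" unfolding f_def by auto
  have G: "graph_game N E = mat_of_rows N (concat (map f es))"
    unfolding graph_game_def f_def es_def Let_def ..
  have rows: "length (concat (map f es)) = 2 * length es" by (rule concat_map_pairs(1)[OF len])
  show "graph_game N E $$ (2 * k, c) =
           ((if c = i then 1 else 0) + (-1) * (if c = j then 1 else 0)) / (4 * real (length es))"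
    using concat_map_pairs(2)[OF len, of "2 * k"] k ij c rows by (simp add: G mat_of_rows_index f_def)
  show "graph_game N E $$ (2 * k + 1, c) =
           ((if c = i then 1 else 0) + 1 * (if c = j then 1 else 0)) / (4 * real (length es))"
    using concat_map_pairs(2)[OF len, of "2 * k + 1"] k ij c rows by (simp add: G mat_of_rows_index f_def)
qed

lemma graph_game_dims:
  "dim_row (graph_game N E) = 2 * length (graph_edges N E)" "dim_col (graph_game N E) = N"
proof -
  show "dim_col (graph_game N E) = N" unfolding graph_game_def Let_def by simp
  show "dim_row (graph_game N E) = 2 * length (graph_edges N E)"
    unfolding graph_game_def Let_def by (simp add: concat_map_pairs(1) split: prod.split)
qed

lemma sum_delta_pair:
  fixes f :: "nat \<Rightarrow> real"
  assumes "i < N" "j < N"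
  shows "(\<Sum>b<N. ((if b = i then 1 else 0) + s * (if b = j then 1 else 0)) * f b) = f i + s * f j"
proof -
  have "((if b = i then 1 else 0) + s * (if b = j then 1 else 0)) * f b
     = (if b = i then f b else 0) + (if b = j then s * f b else 0)" for b
    by (auto simp: algebra_simps)
  then show ?thesis using assms by (simp add: sum.distrib)
qed

lemma pair_row_form:
  fixes W :: "nat \<Rightarrow> nat \<Rightarrow> real"
  assumes "i < N" "j < N"
  shows "(\<Sum>a<N. \<Sum>b<N. ((if a = i then 1 else 0) + s * (if a = j then 1 else 0)) / d *
            (((if b = i then 1 else 0) + s * (if b = j then 1 else 0)) / d) * W a b)
       = (W i i + s * W i j + s * W j i + s * s * W j j) / (d * d)"
proof -
  define p where "p a = ((if a = i then 1 else 0) + s * (if a = j then 1 else 0) :: real)" for a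
  have "(\<Sum>a<N. \<Sum>b<N. p a / d * (p b / d) * W a b) = (\<Sum>a<N. p a * (\<Sum>b<N. p b * W a b)) / (d * d)"
    by (simp add: sum_divide_distrib sum_distrib_left mult_ac)
  also have "\<dots> = (\<Sum>a<N. p a * (W a i + s * W a j)) / (d * d)"
    unfolding p_def using assms by (simp add: sum_delta_pair)
  also have "(\<Sum>a<N. p a * (W a i + s * W a j)) = (W i i + s * W i j) + s * (W j i + s * W j j)"
    unfolding p_def using sum_delta_pair[OF assms, of s "\<lambda>a. W a i + s * W a j"] by simp
  finally show ?thesis unfolding p_def by (simp add: algebra_simps)
qed

lemma row_form_value:
  fixes G W :: "real mat"
  assumes row: "\<forall>c<N. G $$ (r, c) = ((if c = i then 1 else 0) + s * (if c = j then 1 else 0)) / d"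
    and s: "s * s = 1" and d: "d > 0" and ij: "i < N" "j < N"
    and sym: "\<forall>i<N. \<forall>j<N. W $$ (i, j) = W $$ (j, i)" and diag: "\<forall>i<N. W $$ (i, i) = 1"
  shows "sqrt (\<Sum>a<N. \<Sum>b<N. G $$ (r, a) * G $$ (r, b) * W $$ (a, b)) = sqrt (2 + 2 * s * W $$ (i, j)) / d"
proof -
  have "(\<Sum>a<N. \<Sum>b<N. G $$ (r, a) * G $$ (r, b) * W $$ (a, b))
      = (\<Sum>a<N. \<Sum>b<N. ((if a = i then 1 else 0) + s * (if a = j then 1 else 0)) / d *
        (((if b = i then 1 else 0) + s * (if b = j then 1 else 0)) / d) * W $$ (a, b))"
    by (intro sum.cong refl) (simp only: lessThan_iff row[rule_format])
  also have "\<dots> = (W $$ (i, i) + s * W $$ (i, j) + s * W $$ (j, i) + s * s * W $$ (j, j)) / (d * d)"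
    by (rule pair_row_form[OF ij])
  also have "\<dots> = (2 + 2 * s * W $$ (i, j)) / (d * d)" using sym diag ij s by simp
  finally show ?thesis using d by (simp add: real_sqrt_divide real_sqrt_mult)
qed

lemma sum_consecutive_pairs: "(\<Sum>r<2 * (L::nat). h r) = (\<Sum>k<L. h (2 * k) + h (2 * k + 1))"
  by (induction L) (simp_all add: sum.distrib algebra_simps)

lemma graph_game_obj:
  fixes N :: nat and E :: "nat \<Rightarrow> nat \<Rightarrow> bool" and W :: "real mat"
  defines "es \<equiv> graph_edges N E"
  assumes sym: "\<forall>i<N. \<forall>j<N. W $$ (i, j) = W $$ (j, i)" and diag: "\<forall>i<N. W $$ (i, i) = 1"
  shows "gamma_obj (graph_game N E) W =
           (\<Sum>k<length es. edge_value (W $$ (es ! k))) / (4 * real (length es))"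
proof -
  define d where "d = 4 * real (length es)"
  define G where "G = graph_game N E"
  define h where "h r = sqrt (\<Sum>a<N. \<Sum>b<N. G $$ (r, a) * G $$ (r, b) * W $$ (a, b))" for r
  have pair: "h (2 * k) + h (2 * k + 1) = edge_value (W $$ (es ! k)) / d"
    if k: "k < length es" for k
  proof -
    obtain i j where ij: "es ! k = (i, j)" by fastforce
    have "(i, j) \<in> set es" using k ij nth_mem by metis
    then have ijN: "i < N" "j < N" unfolding es_def graph_edges_mem by auto
    have d: "d > 0" using k unfolding d_def by auto
    have row: "h (2 * k + r) = sqrt (2 + 2 * s * W $$ (i, j)) / d"
      if "\<forall>c<N. G $$ (2 * k + r, c) = ((if c = i then 1 else 0) + s * (if c = j then 1 else 0)) / d"
        and "s * s = 1" for r s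
      unfolding h_def by (rule row_form_value[OF that d ijN(1,2) sym diag])
    have "h (2 * k + 0) = sqrt (2 + 2 * (-1) * W $$ (i, j)) / d"
      by (rule row) (use graph_game_entries(1)[OF k[unfolded es_def] ij[unfolded es_def]] in
          \<open>simp_all add: G_def d_def es_def\<close>)
    moreover have "h (2 * k + 1) = sqrt (2 + 2 * 1 * W $$ (i, j)) / d"
      by (rule row) (use graph_game_entries(2)[OF k[unfolded es_def] ij[unfolded es_def]] in
          \<open>simp_all add: G_def d_def es_def\<close>)
    ultimately show ?thesis using ij by (simp add: edge_value_def add_divide_distrib)
  qed
  have "gamma_obj G W = (\<Sum>r<2 * length es. h r)"
    unfolding gamma_obj_def h_def G_def graph_game_dims es_def ..
  also have "\<dots> = (\<Sum>k<length es. edge_value (W $$ (es ! k)) / d)"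
    unfolding sum_consecutive_pairs using pair by simp
  finally show ?thesis unfolding G_def d_def by (simp add: sum_divide_distrib)
qed

lemma gamma_feasible_entries:
  assumes "gamma_feasible G V"
  defines "N \<equiv> dim_col G"
  shows "V \<in> carrier_mat N N"
    and "\<forall>i<N. \<forall>j<N. V $$ (i, j) = V $$ (j, i)"
    and "\<forall>i<N. V $$ (i, i) = 1"
    and "\<forall>x. quad_form N (\<lambda>i j. V $$ (i, j)) x \<ge> 0"
proof -
  have psd: "psd_mat V" and C: "V \<in> carrier_mat N N" and diag: "\<forall>i<N. V $$ (i, i) = 1"
    using assms unfolding gamma_feasible_def N_def by auto
  show "V \<in> carrier_mat N N" "\<forall>i<N. V $$ (i, i) = 1" by (fact C, fact diag)
  have "V\<^sup>T = V" using psd unfolding psd_mat_def by simp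
  then show "\<forall>i<N. \<forall>j<N. V $$ (i, j) = V $$ (j, i)"
    using C by (metis carrier_matD index_transpose_mat(1))
  show "\<forall>x. quad_form N (\<lambda>i j. V $$ (i, j)) x \<ge> 0"
  proof
    fix x :: "nat \<Rightarrow> real"
    have "quad_form N (\<lambda>i j. V $$ (i, j)) x = vec N x \<bullet> (V *\<^sub>v vec N x)"
      using C by (simp add: quad_form_def scalar_prod_def row_def sum_distrib_left mult.assoc
          atLeast0LessThan)
    also have "\<dots> \<ge> 0" using psd C unfolding psd_mat_def by auto
    finally show "quad_form N (\<lambda>i j. V $$ (i, j)) x \<ge> 0" .
  qed
qed

text \<open>The identity matrix is feasible and attains 2 sqrt 2 on every edge, so an optimal
  solution of a graph game has zero correlation along every edge.\<close>

lemma graph_game_optimal_edge: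
  assumes opt: "gamma_optimal (graph_game N E) V" and ij: "i < j" "j < N" "E i j"
  shows "V $$ (i, j) = 0"
proof (rule ccontr)
  assume nz: "V $$ (i, j) \<noteq> 0"
  define es where "es = graph_edges N E"
  have feas: "gamma_feasible (graph_game N E) V" using opt unfolding gamma_optimal_def by simp
  note V = gamma_feasible_entries[OF feas, unfolded graph_game_dims]
  have "(i, j) \<in> set es" using ij unfolding es_def graph_edges_mem by simp
  then obtain k0 where k0: "k0 < length es" "es ! k0 = (i, j)" by (auto simp: in_set_conv_nth)
  have I: "gamma_feasible (graph_game N E) (1\<^sub>m N)"
    unfolding gamma_feasible_def psd_mat_def graph_game_dims
    by (auto simp: scalar_prod_def intro!: sum_nonneg)
  have edge_I: "(1\<^sub>m N :: real mat) $$ (es ! k) = 0" if "k < length es" for k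
  proof -
    obtain a b where ab: "es ! k = (a, b)" by fastforce
    have "(a, b) \<in> set es" using that ab nth_mem by metis
    then show ?thesis using ab unfolding es_def graph_edges_mem by simp
  qed
  have pos: "0 < 4 * real (length es)" using k0(1) by (cases es) auto
  have "(\<Sum>k<length es. edge_value (V $$ (es ! k))) < (\<Sum>k<length es. 2 * sqrt 2)"
  proof (rule sum_strict_mono_ex1)
    have "edge_value (V $$ (es ! k0)) < 2 * sqrt 2" using k0(2) nz by (simp add: edge_value_lt)
    then show "\<exists>k\<in>{..<length es}. edge_value (V $$ (es ! k)) < 2 * sqrt 2" using k0(1) by blast
  qed (auto simp: edge_value_le)
  also have "\<dots> = (\<Sum>k<length es. edge_value ((1\<^sub>m N :: real mat) $$ (es ! k)))"
    by (intro sum.cong refl) (simp add: edge_I edge_value_def)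
  finally have "gamma_obj (graph_game N E) V < gamma_obj (graph_game N E) (1\<^sub>m N)"
    using pos V(2,3) graph_game_obj[of N "1\<^sub>m N" E] graph_game_obj[of N V E]
    unfolding es_def by (simp add: divide_strict_right_mono)
  then show False using opt I unfolding gamma_optimal_def by (meson not_le)
qed

section \<open>The game CL(n)\<close>

lemma CL_adj_sym: "CL_adj vs x y \<Longrightarrow> CL_adj vs y x"
  unfolding CL_adj_def by (auto simp: Int_commute mult.commute)

lemma CL_nonadjacent_sign:
  assumes "distinct vs" "x < length vs" "y < length vs" "\<not> CL_adj vs x y"
  shows "clifford_sign (vs ! x) (vs ! y) = 1"
proof -
  have "even (card (vs ! x) * card (vs ! y) + card (vs ! x \<inter> vs ! y))"
  proof (cases "x = y")
    case False
    then have "vs ! x \<noteq> vs ! y" using assms by (simp add: nth_eq_iff_index_eq)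
    then have "even (int (card (vs ! x)) * int (card (vs ! y)) - int (card (vs ! x \<inter> vs ! y)))"
      using assms(4) unfolding CL_adj_def by simp
    then have "even (int (card (vs ! x) * card (vs ! y) + card (vs ! x \<inter> vs ! y)))" by simp
    then show ?thesis by presburger
  qed simp
  then show ?thesis unfolding clifford_sign_def by simp
qed

text \<open>For an optimal solution V of CL(n), every entry is supported where the sign is +1:
  on edges the entry vanishes, elsewhere the sign is 1.\<close>

lemma CL_optimal_sign_invariant:
  assumes dist: "distinct vs" and opt: "gamma_optimal (CL_game vs) V"
    and x: "x < length vs" and y: "y < length vs"
  shows "clifford_sign (vs ! x) (vs ! y) * (V $$ (x, y))\<^sup>2 = (V $$ (x, y))\<^sup>2"
proof (cases "CL_adj vs x y")
  case True
  have opt': "gamma_optimal (graph_game (length vs) (CL_adj vs)) V"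
    using opt unfolding CL_game_def .
  have sym: "V $$ (x, y) = V $$ (y, x)"
    using gamma_feasible_entries(2)[of "CL_game vs" V] opt x y
    unfolding gamma_optimal_def CL_game_def graph_game_dims by blast
  have "x \<noteq> y" using True unfolding CL_adj_def by auto
  then consider "x < y" | "y < x" by linarith
  then have "V $$ (x, y) = 0"
  proof cases
    case 1 then show ?thesis using graph_game_optimal_edge[OF opt' _ y True] by simp
  next
    case 2 then show ?thesis
      using graph_game_optimal_edge[OF opt' _ x CL_adj_sym[OF True]] sym by simp
  qed
  then show ?thesis by simp
qed (simp add: CL_nonadjacent_sign[OF dist x y])

lemma square_shift_le: "(m::nat) \<ge> 15 \<Longrightarrow> (m + 4)\<^sup>2 \<le> 2 * m\<^sup>2"
proof -
  assume m: "m \<ge> 15"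
  have "15 * m \<le> m * m" using m by (intro mult_right_mono) auto
  then have "16 + m * 8 \<le> m * m" using m by linarith
  then show ?thesis by (simp add: power2_eq_square algebra_simps)
qed

lemma square_le_pow2: "n \<ge> 6 \<Longrightarrow> (4 * n - 9)\<^sup>2 \<le> 4 * 2 ^ n"
proof (induction n rule: nat_induct_at_least)
  case (Suc n)
  have "(4 * Suc n - 9)\<^sup>2 = ((4 * n - 9) + 4)\<^sup>2" using Suc.hyps by simp
  also have "\<dots> \<le> 2 * (4 * n - 9)\<^sup>2" using square_shift_le[of "4 * n - 9"] Suc.hyps by simp
  also have "\<dots> \<le> 2 * (4 * 2 ^ n)" using Suc.IH by simp
  finally show ?case by simp
qed simp

lemma rank_numeric_ineq: "n \<ge> 3 \<Longrightarrow> (4 * n - 9)\<^sup>2 * 2 ^ (n + 1) < 9 * (2 ^ n - 1)\<^sup>2"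
proof -
  assume n: "n \<ge> 3"
  consider "n = 3" | "n = 4" | "n = 5" | "n \<ge> 6" using n by linarith
  then show ?thesis
  proof cases
    case 4
    define B :: nat where "B = 2 ^ n - 1"
    have "(2::nat) ^ 6 \<le> 2 ^ n" using 4 by (intro power_increasing) auto
    then have B: "2 ^ n = B + 1" "B \<ge> 63" unfolding B_def by auto
    have "(4 * n - 9)\<^sup>2 * 2 ^ (n + 1) \<le> 4 * 2 ^ n * (2 * 2 ^ n)"
      using square_le_pow2[OF 4] by (simp add: mult_right_mono)
    also have "\<dots> = 4 * (B + 1) * (2 * (B + 1))" using B(1) by simp
    also have "\<dots> < 9 * B\<^sup>2"
    proof -
      have "63 * B \<le> B * B" using B(2) by (intro mult_right_mono) auto
      then have "8 + B * 16 < B * B" using B(2) by linarith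
      then show ?thesis by (simp add: power2_eq_square algebra_simps)
    qed
    finally show ?thesis unfolding B_def .
  qed simp_all
qed

lemma rank_count_bound:
  fixes n p :: nat
  assumes n: "n \<ge> 3" and h: "real (2 ^ n - 1) \<le> real p * sqrt (2 ^ (n + 1))"
  shows "4 * real n - 8 \<le> 3 * real p"
proof (rule ccontr)
  assume "\<not> ?thesis"
  then have "3 * p \<le> 4 * n - 9" by linarith
  then have "(3 * p)\<^sup>2 \<le> (4 * n - 9)\<^sup>2" by (rule power_mono) simp
  then have "9 * p\<^sup>2 * 2 ^ (n + 1) \<le> (4 * n - 9)\<^sup>2 * 2 ^ (n + 1)"
    by (simp add: power_mult_distrib)
  also have "\<dots> < 9 * (2 ^ n - 1)\<^sup>2" by (rule rank_numeric_ineq[OF n])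
  finally have lt: "real p ^ 2 * 2 ^ (n + 1) < real (2 ^ n - 1) ^ 2"
    by (metis (mono_tags, lifting) of_nat_less_iff of_nat_mult of_nat_numeral of_nat_power
        mult.assoc mult_less_cancel_left_pos zero_less_numeral)
  have "real (2 ^ n - 1) ^ 2 \<le> (real p * sqrt (2 ^ (n + 1))) ^ 2"
    using h by (intro power_mono) auto
  also have "\<dots> = real p ^ 2 * 2 ^ (n + 1)" by (simp add: power_mult_distrib)
  finally show False using lt by simp
qed

theorem proposition7p3:
  fixes n :: nat and vs :: "nat set list" and V :: "real mat"
  assumes "n \<ge> 3"
    and "distinct vs"
    and "set vs = {S. S \<subseteq> {1..n} \<and> S \<noteq> {}}"
    and "gamma_optimal (CL_game vs) V"
  shows "real (mat_rank V) \<ge> (4 * real n - 8) / 3"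
proof -
  note n = assms(1) and dist = assms(2) and verts = assms(3) and opt = assms(4)
  define N where "N = length vs"
  have "gamma_feasible (CL_game vs) V" using opt unfolding gamma_optimal_def by simp
  note V = gamma_feasible_entries[OF this, unfolded CL_game_def graph_game_dims, folded N_def]
  obtain U P where chol: "cholesky_factor N (\<lambda>i j. V $$ (i, j)) U P"
    using cholesky_factor_exists[of N "\<lambda>i j. V $$ (i, j)"] V(2,4) by blast
  have "P \<subseteq> {..<N}" using chol unfolding cholesky_factor_def by blast
  then have "card P \<le> mat_rank V"
    by (rule card_le_mat_rank[OF V(1)]) (rule allI, rule cholesky_kernel_trivial[OF chol])
  moreover have "N = 2 ^ n - 1"
  proof -
    have "set vs = Pow {1..n} - {{}}" using verts by auto
    then show ?thesis using distinct_card[OF dist] unfolding N_def by (simp add: card_Pow)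
  qed
  moreover have "real N \<le> real (card P) * sqrt (2 ^ (card {1..n} + 1))"
  proof (rule cholesky_rank_bound[OF chol V(3)])
    show "\<forall>x<N. \<forall>y<N. clifford_sign (vs ! x) (vs ! y) * (V $$ (x, y))\<^sup>2 = (V $$ (x, y))\<^sup>2"
      using CL_optimal_sign_invariant[OF dist opt] unfolding N_def by blast
    show "inj_on ((!) vs) {..<N}" unfolding N_def using dist by (intro inj_on_nth) auto
    show "\<forall>x<N. vs ! x \<subseteq> {1..n}" using verts unfolding N_def by (auto dest!: nth_mem)
  qed simp
  ultimately show ?thesis using rank_count_bound[OF n, of "card P"] by simp
qed

end
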